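(* Let $Fil_{10}$ be the set of parameter values $(a_1,a_2,a_4,a_5,a_7,\dots,a_{15})$ of the family $F_{10}$ satisfying $a_1(2a_2+7a_4+7a_7)=0$, $3a_4^2+3a_4a_7-2a_2a_7=0$, $a_1(2a_9+5a_{11})-2a_2a_{10}+a_4(7a_8-2a_{10})+a_7(-3a_5+2a_8-7a_{10})=0$. Then $Fil_{10}=Fil_{10}(1)\cup Fil_{10}(2)\cup Fil_{10}(3)$, where $Fil_{10}(1)$ is defined by $a_1=0$, $3a_4^2+3a_4a_7-2a_2a_7=0$, $-2a_2a_{10}+a_4(7a_8-2a_{10})+a_7(-3a_5+2a_8-7a_{10})=0$; $Fil_{10}(2)$ is defined by $a_2=0$, $a_4=-a_7$, $a_1(2a_9+5a_{11})+a_4(3a_5+5a_8+5a_{10})=0$; $Fil_{10}(3)$ is defined by $a_2=-2a_4$, $3a_4=-7a_7$, $a_1(2a_9+5a_{11})+a_4\left(\tfrac97a_5+\tfrac{43}{7}a_8+5a_{10}\right)=0$. Consequently the set of 10-dimensional filiform Lie brackets is the union of the $GL(10,\mathbb{K})$-orbits of these three sets.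
   Context: $\mathbb{K}$ is algebraically closed of characteristic $0$. The family $F_{10}$ on basis $\{X_0,\dots,X_9\}$: $\mu(X_0,X_i)=X_{i+1}$ ($1\le i\le 8$), $\mu(X_2,X_7)=a_1X_9$, $\mu(X_1,X_7)=a_1X_8+a_2X_9$, $\mu(X_3,X_6)=-a_1X_9$, $\mu(X_2,X_6)=a_4X_9$, $\mu(X_1,X_6)=a_1X_7+(a_2+a_4)X_8+a_5X_9$, $\mu(X_4,X_5)=a_1X_9$, $\mu(X_3,X_5)=a_7X_9$, $\mu(X_2,X_5)=(a_4+a_7)X_8+a_8X_9$, $\mu(X_1,X_5)=a_1X_6+(a_2+2a_4+a_7)X_7+(a_5+a_8)X_8+a_9X_9$, $\mu(X_3,X_4)=a_7X_8+a_{10}X_9$, $\mu(X_2,X_4)=(a_4+2a_7)X_7+(a_8+a_{10})X_8+a_{11}X_9$, $\mu(X_1,X_4)=a_1X_5+(a_2+3a_4+3a_7)X_6+(a_5+2a_8+a_{10})X_7+(a_9+a_{11})X_8+a_{12}X_9$, $\mu(X_2,X_3)=(a_4+2a_7)X_6+(a_8+a_{10})X_7+a_{11}X_8+a_{13}X_9$, $\mu(X_1,X_3)=a_1X_4+(a_2+4a_4+5a_7)X_5+(a_5+3a_8+2a_{10})X_6+(a_9+2a_{11})X_7+(a_{12}+a_{13})X_8+a_{14}X_9$, $\mu(X_1,X_2)=a_1X_3+(a_2+4a_4+5a_7)X_4+(a_5+3a_8+2a_{10})X_5+(a_9+2a_{11})X_6+(a_{12}+a_{13})X_7+a_{14}X_8+a_{15}X_9$,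 others zero. Every 10-dimensional filiform Lie algebra is isomorphic to a member of $F_{10}$ with parameters in $Fil_{10}$. *)

theory Defs
  imports "HOL-Computational_Algebra.Polynomial"
begin

text \<open>Parameters (a_1,a_2,a_4,a_5,a_7,...,a_15) of the family F_10 are encoded as a
  function a :: nat => 'a; only the indices 1,2,4,5,7,...,15 are relevant.\<close>

definition Fil10 :: "(nat \<Rightarrow> 'a::field) set" where
  "Fil10 = {a. a 1 * (2 * a 2 + 7 * a 4 + 7 * a 7) = 0
            \<and> 3 * a 4 ^ 2 + 3 * a 4 * a 7 - 2 * a 2 * a 7 = 0
            \<and> a 1 * (2 * a 9 + 5 * a 11) - 2 * a 2 * a 10 + a 4 * (7 * a 8 - 2 * a 10)
                + a 7 * (- 3 * a 5 + 2 * a 8 - 7 * a 10) = 0}"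

definition Fil10_1 :: "(nat \<Rightarrow> 'a::field) set" where
  "Fil10_1 = {a. a 1 = 0
            \<and> 3 * a 4 ^ 2 + 3 * a 4 * a 7 - 2 * a 2 * a 7 = 0
            \<and> - 2 * a 2 * a 10 + a 4 * (7 * a 8 - 2 * a 10)
                + a 7 * (- 3 * a 5 + 2 * a 8 - 7 * a 10) = 0}"

definition Fil10_2 :: "(nat \<Rightarrow> 'a::field) set" where
  "Fil10_2 = {a. a 2 = 0 \<and> a 4 = - a 7
            \<and> a 1 * (2 * a 9 + 5 * a 11) + a 4 * (3 * a 5 + 5 * a 8 + 5 * a 10) = 0}"

definition Fil10_3 :: "(nat \<Rightarrow> 'a::field) set" where
  "Fil10_3 = {a. a 2 = - 2 * a 4 \<and> 3 * a 4 = - 7 * a 7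
            \<and> a 1 * (2 * a 9 + 5 * a 11)
                + a 4 * (9 / 7 * a 5 + 43 / 7 * a 8 + 5 * a 10) = 0}"

definition alg_closed_field :: "'a::field itself \<Rightarrow> bool" where
  "alg_closed_field _ \<longleftrightarrow> (\<forall>p :: 'a poly. degree p \<ge> 1 \<longrightarrow> (\<exists>x. poly p x = 0))"

end

theory Submission
  imports Defs
begin

text \<open>Each of the three components satisfies the defining equations of \<open>Fil10\<close> by direct
  substitution. Conversely, if \<open>a\<^sub>1 = 0\<close> the equations of \<open>Fil10\<close> are those of \<open>Fil10(1)\<close>;
  otherwise \<open>2a\<^sub>2 + 7a\<^sub>4 + 7a\<^sub>7 = 0\<close>, and modulo this linear relation the quadratic equation
  factors as \<open>(3a\<^sub>4 + 7a\<^sub>7)(a\<^sub>4 + a\<^sub>7) = 0\<close>; the two factors give \<open>Fil10(2)\<close> and \<open>Fil10(3)\<close>.\<close>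

lemma Fil10_quadric_factorization:
  fixes x\<^sub>2 x\<^sub>4 x\<^sub>7 :: "'a::comm_ring_1"
  shows "3 * x\<^sub>4 ^ 2 + 3 * x\<^sub>4 * x\<^sub>7 - 2 * x\<^sub>2 * x\<^sub>7
           = (3 * x\<^sub>4 + 7 * x\<^sub>7) * (x\<^sub>4 + x\<^sub>7) - x\<^sub>7 * (2 * x\<^sub>2 + 7 * x\<^sub>4 + 7 * x\<^sub>7)"
  by (simp add: algebra_simps power2_eq_square)

lemma Fil10_1_subset_Fil10: "Fil10_1 \<subseteq> Fil10"
  by (auto simp add: Fil10_def Fil10_1_def)

lemma Fil10_2_subset_Fil10: "(Fil10_2 :: (nat \<Rightarrow> 'a::field) set) \<subseteq> Fil10"
  by (auto simp add: Fil10_def Fil10_2_def power2_eq_square algebra_simps)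

lemma Fil10_3_subset_Fil10: "(Fil10_3 :: (nat \<Rightarrow> 'a::field_char_0) set) \<subseteq> Fil10"
proof
  fix a :: "nat \<Rightarrow> 'a"
  assume "a \<in> Fil10_3"
  hence a7: "a 7 = - 3 * a 4 / 7" and a2: "a 2 = - 2 * a 4"
    and e: "a 1 * (2 * a 9 + 5 * a 11) + a 4 * (9 / 7 * a 5 + 43 / 7 * a 8 + 5 * a 10) = 0"
    by (auto simp add: Fil10_3_def field_simps)
  show "a \<in> Fil10"
    unfolding Fil10_def mem_Collect_eq using e by (simp add: a7 a2 field_simps power2_eq_square)
qed

lemma Fil10_a1_nonzero:
  fixes a :: "nat \<Rightarrow> 'a::field_char_0"
  assumes "a \<in> Fil10" and "a 1 \<noteq> 0"
  shows "a \<in> Fil10_2 \<union> Fil10_3"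
proof -
  have lin: "2 * a 2 + 7 * a 4 + 7 * a 7 = 0"
    using assms by (simp add: Fil10_def)
  have quadric: "3 * a 4 ^ 2 + 3 * a 4 * a 7 - 2 * a 2 * a 7 = 0"
    and bilinear: "a 1 * (2 * a 9 + 5 * a 11) - 2 * a 2 * a 10 + a 4 * (7 * a 8 - 2 * a 10)
                + a 7 * (- 3 * a 5 + 2 * a 8 - 7 * a 10) = 0"
    using assms(1) by (simp_all add: Fil10_def)
  have a2: "a 2 = - 7 * (a 4 + a 7) / 2"
  proof -
    have "a 2 = ((2 * a 2 + 7 * a 4 + 7 * a 7) - 7 * (a 4 + a 7)) / 2"
      by (simp add: algebra_simps)
    also have "\<dots> = - 7 * (a 4 + a 7) / 2"
      using lin by simp
    finally show ?thesis .
  qed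
  have "(3 * a 4 + 7 * a 7) * (a 4 + a 7) = 0"
    using quadric lin by (simp add: Fil10_quadric_factorization)
  then consider "a 4 + a 7 = 0" | "3 * a 4 + 7 * a 7 = 0"
    by auto
  then show ?thesis
  proof cases
    case 1
    hence a7: "a 7 = - a 4" and a2': "a 2 = 0"
      using a2 by (simp_all add: eq_neg_iff_add_eq_0 add.commute)
    have "a 1 * (2 * a 9 + 5 * a 11) + a 4 * (3 * a 5 + 5 * a 8 + 5 * a 10) = 0"
      using bilinear by (simp add: a7 a2' algebra_simps)
    thus ?thesis using a7 a2' by (simp add: Fil10_2_def)
  next
    case 2
    have "a 7 = ((3 * a 4 + 7 * a 7) - 3 * a 4) / 7"
      by (simp add: algebra_simps)
    hence a7: "a 7 = - 3 * a 4 / 7"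
      using 2 by simp
    have a2': "a 2 = - 2 * a 4"
      using a2 by (simp add: a7 field_simps)
    have "a 1 * (2 * a 9 + 5 * a 11) + a 4 * (9 / 7 * a 5 + 43 / 7 * a 8 + 5 * a 10) = 0"
      using bilinear by (simp add: a7 a2' field_simps)
    moreover have "3 * a 4 = - 7 * a 7"
      using a7 by simp
    ultimately show ?thesis using a2' by (simp add: Fil10_3_def)
  qed
qed

theorem proposition29:
  assumes "alg_closed_field TYPE('a::field_char_0)"
  shows "(Fil10 :: (nat \<Rightarrow> 'a) set) = Fil10_1 \<union> Fil10_2 \<union> Fil10_3"
proof
  show "(Fil10 :: (nat \<Rightarrow> 'a) set) \<subseteq> Fil10_1 \<union> Fil10_2 \<union> Fil10_3"
  proof
    fix a :: "nat \<Rightarrow> 'a"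
    assume "a \<in> Fil10"
    then show "a \<in> Fil10_1 \<union> Fil10_2 \<union> Fil10_3"
      using Fil10_a1_nonzero by (cases "a 1 = 0") (auto simp add: Fil10_def Fil10_1_def)
  qed
  show "Fil10_1 \<union> Fil10_2 \<union> Fil10_3 \<subseteq> (Fil10 :: (nat \<Rightarrow> 'a) set)"
    using Fil10_1_subset_Fil10 Fil10_2_subset_Fil10 Fil10_3_subset_Fil10 by blast
qed

end
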